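(* Let $n=p_1p_2\cdots p_r$, where $r\geq 3$ and $p_1<p_2<\cdots<p_r$ are primes. Then $$\delta(\mathcal{P}(C_n))=\min\{\deg(p_sp_{s+1}\cdots p_r) : 2\leq s\leq r\}.$$
   Context: For a finite group $G$, the power graph $\mathcal{P}(G)$ is the simple undirected graph with vertex set $G$ in which two distinct vertices are adjacent if one is an integral power of the other. $C_n$ denotes the cyclic group of order $n$, identified with $\mathbb{Z}_n=\{0,1,\ldots,n-1\}$, so a positive divisor $d<n$ of $n$ is regarded as the element $d\in\mathbb{Z}_n$. $\deg(a)$ is the degree of vertex $a$ in $\mathcal{P}(C_n)$ and $\delta$ denotes minimum degree. *)

theory Defs
  imports "HOL-Computational_Algebra.Primes"
begin

text \<open>The cyclic group C_n is modelled as Z_n = {0..<n} under addition mod n.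
  The integral powers of a in C_n are exactly the multiples (k * a) mod n.\<close>

definition cyc_powers :: "nat \<Rightarrow> nat \<Rightarrow> nat set" where
  "cyc_powers n a = {(k * a) mod n | k. True}"

definition pg_adj :: "nat \<Rightarrow> nat \<Rightarrow> nat \<Rightarrow> bool" where
  "pg_adj n a b \<longleftrightarrow> a \<noteq> b \<and> (b \<in> cyc_powers n a \<or> a \<in> cyc_powers n b)"

definition pg_deg :: "nat \<Rightarrow> nat \<Rightarrow> nat" where
  "pg_deg n a = card {b \<in> {0..<n}. pg_adj n a b}"

definition pg_min_deg :: "nat \<Rightarrow> nat" where
  "pg_min_deg n = Min (pg_deg n ` {0..<n})"

end

theory Submission
  imports Defs "HOL-Number_Theory.Number_Theory"
begin

text \<open>For squarefree \<open>n\<close>, an element of order \<open>m\<close> in \<open>C\<^sub>n\<close> is adjacent exactly to the other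
  elements of the subgroup it generates and to the elements having it as a power; counting
  these shows that its degree is \<open>m + (n/m - 1) \<phi>(m) - 1\<close>, a function of the order alone.
  Writing \<open>m\<close> as a product of some of the primes, swapping a prime of \<open>m\<close> for a smaller one
  not in \<open>m\<close> never increases this value, so among orders with \<open>k\<close> prime factors the product
  \<open>p\<^sub>1\<cdots>p\<^sub>k\<close> is optimal, while the orders \<open>1\<close> and \<open>n\<close> give the largest possible degree
  \<open>n - 1\<close>. Finally \<open>p\<^sub>1\<cdots>p\<^sub>k\<close> is the order of \<open>p\<^sub>k\<^sub>+\<^sub>1\<cdots>p\<^sub>r\<close>.\<close>

lemma card_coprime_below:
  assumes "0 < m"
  shows "card {c. c < m \<and> coprime c (m::nat)} = totient m"
proof -
  have "{c. c < m \<and> coprime c m} = (if m = 1 then {0} else totatives m)"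
    using assms by (auto simp: in_totatives_iff order_le_less intro!: Nat.gr0I)
  then show ?thesis
    by (simp add: totient_def)
qed

lemma card_coprime_below_mult:
  assumes "0 < m"
  shows "card {b. b < g * m \<and> coprime b (m::nat)} = g * totient m"
proof -
  let ?C = "{c. c < m \<and> coprime c m}"
  have decomp: "{b. b < g * m \<and> coprime b m} = (\<lambda>(q, c). q * m + c) ` ({..<g} \<times> ?C)"
  proof (intro equalityI subsetI)
    fix b assume "b \<in> {b. b < g * m \<and> coprime b m}"
    then have "(b div m, b mod m) \<in> {..<g} \<times> ?C"
      using assms by (auto simp: less_mult_imp_div_less)
    then show "b \<in> (\<lambda>(q, c). q * m + c) ` ({..<g} \<times> ?C)"
      by (rule rev_image_eqI) simp
  next
    fix b assume "b \<in> (\<lambda>(q, c). q * m + c) ` ({..<g} \<times> ?C)"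
    then obtain q c where b: "b = q * m + c" "q < g" "c < m" "coprime c m" by auto
    have "q * m + c < Suc q * m" using \<open>c < m\<close> by simp
    also have "\<dots> \<le> g * m" using \<open>q < g\<close> by (intro mult_right_mono) auto
    finally have "q * m + c < g * m" .
    moreover have "coprime (q * m + c) m"
      using coprime_mod_left_iff[of m "q * m + c"] assms b by simp
    ultimately show "b \<in> {b. b < g * m \<and> coprime b m}" using b by simp
  qed
  have "q = q' \<and> c = c'" if "c < m" "c' < m" "q * m + c = q' * m + c'" for q c q' c'
    using that by (metis add.commute div_mult_self1 div_less mod_mult_self1 mod_less less_nat_zero_code add_0)
  then have "inj_on (\<lambda>(q, c). q * m + c) ({..<g} \<times> ?C)"
    by (auto simp: inj_on_def)
  then show ?thesis
    unfolding decomp using assms by (simp add: card_image card_cartesian_product card_coprime_below)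
qed

lemma cyc_powers_eq:
  assumes "0 < n"
  shows "cyc_powers n a = {b. b < n \<and> gcd a n dvd b}"
proof (intro equalityI subsetI)
  fix b assume "b \<in> cyc_powers n a"
  then obtain k where "b = (k * a) mod n" by (auto simp: cyc_powers_def)
  then show "b \<in> {b. b < n \<and> gcd a n dvd b}" using assms by (simp add: dvd_mod_iff)
next
  fix b assume b: "b \<in> {b. b < n \<and> gcd a n dvd b}"
  then obtain k where "[a * k = b] (mod n)" using cong_solve_dvd_nat by blast
  then have "(k * a) mod n = b" using b by (simp add: cong_def mult.commute)
  then show "b \<in> cyc_powers n a" unfolding cyc_powers_def by blast
qed

lemma pg_adj_iff_gcd_dvd:
  assumes "0 < n" "a < n" "b < n"
  shows "pg_adj n a b \<longleftrightarrow> a \<noteq> b \<and> (gcd a n dvd gcd b n \<or> gcd b n dvd gcd a n)"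
  unfolding pg_adj_def cyc_powers_eq[OF \<open>0 < n\<close>] using assms by auto

lemma gcd_dvd_iff_coprime:
  fixes b g m :: nat
  assumes "coprime g m"
  shows "gcd b (g * m) dvd g \<longleftrightarrow> coprime b m"
proof
  assume gcd_dvd: "gcd b (g * m) dvd g"
  show "coprime b m"
  proof (rule coprimeI)
    fix d assume "d dvd b" "d dvd m"
    then have "d dvd g" using gcd_dvd by (metis dvd_mult dvd_trans gcd_greatest)
    from assms this \<open>d dvd m\<close> show "is_unit d" by (rule coprime_common_divisor)
  qed
next
  assume "coprime b m"
  then show "gcd b (g * m) dvd g" by (simp add: gcd_mult_right_right_cancel)
qed

text \<open>Size of the closed neighbourhood of an element of order \<open>m\<close> in the power graph of \<open>C\<^sub>n\<close>,
  \<open>n\<close> squarefree: the subgroup it generates has \<open>m\<close> elements, the elements having it as a power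
  number \<open>(n/m) \<phi>(m)\<close>, and the two sets share its \<open>\<phi>(m)\<close> generators.\<close>
definition nbhd_card :: "nat \<Rightarrow> nat \<Rightarrow> nat" where
  "nbhd_card n m = m + (n div m - 1) * totient m"

lemma pg_deg_eq_nbhd_card:
  assumes "0 < n" "a < n" and coprime: "coprime (gcd a n) (n div gcd a n)"
  shows "pg_deg n a = nbhd_card n (n div gcd a n) - 1"
proof -
  define g where "g = gcd a n"
  define m where "m = n div g"
  have n: "n = g * m" by (simp add: g_def m_def)
  have "0 < g" "0 < m" using \<open>0 < n\<close> n by auto
  have "coprime g m" using coprime by (simp add: g_def m_def)
  define X where "X = {b. b < n \<and> g dvd b}"
  define Y where "Y = {b. b < n \<and> coprime b m}"
  have "pg_adj n a b \<longleftrightarrow> b \<noteq> a \<and> (b \<in> X \<or> b \<in> Y)" if "b < n" for b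
  proof -
    have "g dvd gcd b n \<longleftrightarrow> g dvd b" by (simp add: g_def)
    moreover have "gcd b n dvd g \<longleftrightarrow> coprime b m"
      using gcd_dvd_iff_coprime[OF \<open>coprime g m\<close>] by (simp add: n)
    ultimately show ?thesis
      using pg_adj_iff_gcd_dvd[OF \<open>0 < n\<close> \<open>a < n\<close> \<open>b < n\<close>] \<open>b < n\<close>
      by (auto simp: X_def Y_def g_def[symmetric])
  qed
  then have nbhd: "{b \<in> {0..<n}. pg_adj n a b} = (X \<union> Y) - {a}"
    by (auto simp: X_def Y_def)
  have "X = (\<lambda>c. g * c) ` {..<m}"
    using \<open>0 < g\<close> by (auto simp: X_def n image_iff)
  then have card_X: "card X = m"
    using \<open>0 < g\<close> by (simp add: card_image inj_on_def)
  have card_Y: "card Y = g * totient m"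
    using card_coprime_below_mult[OF \<open>0 < m\<close>] by (simp add: Y_def n)
  have "X \<inter> Y = (\<lambda>c. g * c) ` {c. c < m \<and> coprime c m}"
    using \<open>0 < g\<close> \<open>coprime g m\<close> by (auto simp: X_def Y_def n image_iff)
  then have card_XY: "card (X \<inter> Y) = totient m"
    using \<open>0 < g\<close> by (simp add: card_image inj_on_def card_coprime_below[OF \<open>0 < m\<close>])
  have "finite X" "finite Y" by (auto simp: X_def Y_def)
  then have "card (X \<union> Y) = m + (g - 1) * totient m"
    using card_Un_Int[of X Y] card_X card_Y card_XY \<open>0 < g\<close>
    by (simp add: diff_mult_distrib)
  moreover have "a \<in> X" using \<open>a < n\<close> by (simp add: X_def g_def)
  moreover have "n div m = g" using \<open>0 < m\<close> by (simp add: n)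
  ultimately show ?thesis
    using \<open>finite X\<close> \<open>finite Y\<close> unfolding pg_deg_def nbhd nbhd_card_def
    by (simp add: m_def g_def)
qed

lemma of_nat_nbhd_card:
  assumes "m dvd n" "0 < n"
  shows "real (nbhd_card n m) = m + (n / m - 1) * totient m"
proof -
  have "1 \<le> n div m" using assms by (metis dvd_div_eq_0_iff less_one not_gr0 not_less)
  then show ?thesis
    using assms by (simp add: nbhd_card_def real_of_nat_div)
qed

lemma nbhd_card_le:
  assumes "m dvd n" "0 < n"
  shows "nbhd_card n m \<le> n"
proof -
  obtain k where k: "n = m * k" using assms(1) by (elim dvdE)
  with assms(2) have "0 < m" "0 < k" by auto
  have "nbhd_card n m \<le> m + (n div m - 1) * m"
    unfolding nbhd_card_def by (intro add_left_mono mult_left_mono totient_le) simp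
  also have "\<dots> = n"
    using \<open>0 < m\<close> \<open>0 < k\<close> by (cases k) (simp_all add: k)
  finally show ?thesis .
qed

lemma nbhd_card_mult_prime_mono:
  fixes D q q' n :: nat
  assumes "0 < n" "prime q" "prime q'" "q \<le> q'" "coprime D q" "coprime D q'"
    and "D * q dvd n" "D * q' dvd n"
  shows "nbhd_card n (D * q) \<le> nbhd_card n (D * q')"
proof -
  have "0 < D" using assms(2,5) by (metis coprime_0_left_iff gr0I not_prime_unit)
  define \<Phi> where "\<Phi> = real (totient D)"
  have formula: "real (nbhd_card n (D * x)) = (D - \<Phi>) * x + \<Phi> + n * \<Phi> / D - n * \<Phi> / (D * x)"
    if "prime x" "coprime D x" "D * x dvd n" for x
  proof -
    have "0 < x" using \<open>prime x\<close> by (simp add: prime_gt_0_nat)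
    have "totient (D * x) = totient D * (x - 1)"
      using that by (simp add: totient_mult_coprime totient_prime)
    then have "real (totient (D * x)) = \<Phi> * (x - 1)"
      using \<open>0 < x\<close> by (simp add: \<Phi>_def)
    then have "real (nbhd_card n (D * x)) = D * x + (n / (D * x) - 1) * (\<Phi> * (x - 1))"
      using of_nat_nbhd_card[OF \<open>D * x dvd n\<close> \<open>0 < n\<close>] by simp
    also have "\<dots> = (D - \<Phi>) * x + \<Phi> + n * \<Phi> / D - n * \<Phi> / (D * x)"
      using \<open>0 < D\<close> \<open>0 < x\<close> by (simp add: field_simps)
    finally show ?thesis .
  qed
  have "\<Phi> \<le> D" by (simp add: \<Phi>_def totient_le)
  then have "(D - \<Phi>) * q \<le> (D - \<Phi>) * q'"
    using assms(4) by (intro mult_left_mono) simp_all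
  moreover have "n * \<Phi> / (D * q') \<le> n * \<Phi> / (D * q)"
    using assms(2,3,4) \<open>0 < D\<close>
    by (intro divide_left_mono) (simp_all add: \<Phi>_def prime_gt_0_nat)
  ultimately show ?thesis
    using formula[of q] formula[of q'] assms by simp
qed

lemma dvd_prod_primes_imp_subprod:
  fixes p :: "'a \<Rightarrow> nat"
  assumes "finite I" "inj_on p I" "\<And>i. i \<in> I \<Longrightarrow> prime (p i)" "d dvd (\<Prod>i\<in>I. p i)"
  shows "\<exists>S\<subseteq>I. d = (\<Prod>i\<in>S. p i)"
  using assms
proof (induction I arbitrary: d rule: finite_induct)
  case empty
  then show ?case by simp
next
  case (insert i I)
  have "prime (p i)" "inj_on p I" "\<And>j. j \<in> I \<Longrightarrow> prime (p j)"
    using insert.prems by auto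
  note IH = insert.IH[OF this(2,3)]
  have d_dvd: "d dvd p i * (\<Prod>j\<in>I. p j)" using insert by simp
  show ?case
  proof (cases "p i dvd d")
    case True
    then obtain d' where d': "d = p i * d'" by (elim dvdE)
    then have "d' dvd (\<Prod>j\<in>I. p j)"
      using d_dvd \<open>prime (p i)\<close> by (simp add: prime_gt_0_nat)
    then obtain S where "S \<subseteq> I" "d' = (\<Prod>j\<in>S. p j)" using IH by blast
    moreover from this have "d = (\<Prod>j\<in>insert i S. p j)"
      using d' insert.hyps by (subst prod.insert) (auto intro: finite_subset)
    ultimately show ?thesis by blast
  next
    case False
    then have "coprime d (p i)"
      using \<open>prime (p i)\<close> prime_imp_coprime coprime_commute by blast
    then have "d dvd (\<Prod>j\<in>I. p j)" using d_dvd coprime_dvd_mult_right_iff by blast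
    then show ?thesis using IH by blast
  qed
qed

lemma coprime_prod_disjoint:
  fixes p :: "'a \<Rightarrow> nat"
  assumes "inj_on p I" "\<And>i. i \<in> I \<Longrightarrow> prime (p i)" "S \<subseteq> I" "T \<subseteq> I" "S \<inter> T = {}"
  shows "coprime (\<Prod>i\<in>S. p i) (\<Prod>i\<in>T. p i)"
proof (rule prod_coprime_left, rule prod_coprime_right)
  fix i j assume "i \<in> S" "j \<in> T"
  with assms have "p i \<noteq> p j" "prime (p i)" "prime (p j)"
    by (auto dest: inj_onD)
  then show "coprime (p i) (p j)" by (simp add: primes_coprime)
qed

lemma Min_eq_Min_of_dominating_subset:
  fixes A B :: "'a::linorder set"
  assumes "finite A" "B \<subseteq> A" "B \<noteq> {}" "\<And>a. a \<in> A \<Longrightarrow> \<exists>b\<in>B. b \<le> a"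
  shows "Min A = Min B"
proof (rule antisym)
  have "finite B" using assms(1,2) by (rule rev_finite_subset)
  obtain b where "b \<in> B" "b \<le> Min A"
    using assms(1-4) Min_in[of A] by blast
  then show "Min B \<le> Min A" using \<open>finite B\<close> by (meson Min_le order_trans)
  show "Min A \<le> Min B" using assms(2,3,1) by (rule Min_antimono)
qed

locale increasing_primes =
  fixes p :: "nat \<Rightarrow> nat" and r :: nat
  assumes prime: "\<And>i. i \<in> {1..r} \<Longrightarrow> prime (p i)"
    and strict_mono: "strict_mono_on {1..r} p"
begin

abbreviation N :: nat where
  "N \<equiv> \<Prod>i\<in>{1..r}. p i"

lemma inj: "inj_on p {1..r}"
  using strict_mono by (rule strict_mono_on_imp_inj_on)

lemma subprod_pos: "S \<subseteq> {1..r} \<Longrightarrow> 0 < (\<Prod>i\<in>S. p i)"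
  using prime by (intro prod_pos) (auto simp: prime_gt_0_nat)

lemma dvd_N_imp_subprod: "d dvd N \<Longrightarrow> \<exists>S\<subseteq>{1..r}. d = (\<Prod>i\<in>S. p i)"
  using dvd_prod_primes_imp_subprod[OF _ inj prime] by simp

lemma N_eq_complement_times: "S \<subseteq> {1..r} \<Longrightarrow> N = (\<Prod>i\<in>{1..r} - S. p i) * (\<Prod>i\<in>S. p i)"
  by (rule prod.subset_diff) auto

lemma coprime_div_N:
  assumes "d dvd N"
  shows "coprime d (N div d)"
proof -
  obtain S where S: "S \<subseteq> {1..r}" "d = (\<Prod>i\<in>S. p i)" using dvd_N_imp_subprod assms by blast
  then have "N div d = (\<Prod>i\<in>{1..r} - S. p i)"
    using N_eq_complement_times[OF S(1)] subprod_pos[OF S(1)] by simp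
  then show ?thesis
    using coprime_prod_disjoint[OF inj prime S(1), of "{1..r} - S"] S(2) by auto
qed

lemma nbhd_card_exchange:
  assumes S: "S \<subseteq> {1..r}" and "i \<in> S" "j \<in> {1..r}" "j \<notin> S" "j < i"
  shows "nbhd_card N (\<Prod>k\<in>insert j (S - {i}). p k) \<le> nbhd_card N (\<Prod>k\<in>S. p k)"
proof -
  define D where "D = (\<Prod>k\<in>S - {i}. p k)"
  have "finite S" using S by (rule finite_subset) simp
  have "i \<in> {1..r}" using S \<open>i \<in> S\<close> by auto
  have prod_S: "(\<Prod>k\<in>S. p k) = D * p i"
    using \<open>finite S\<close> \<open>i \<in> S\<close> by (simp add: D_def prod.remove mult.commute)
  have prod_S': "(\<Prod>k\<in>insert j (S - {i}). p k) = D * p j"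
    using \<open>finite S\<close> \<open>j \<notin> S\<close> by (simp add: D_def mult.commute)
  have coprime_D: "coprime D (p k)" if "k \<in> {1..r}" "k \<notin> S - {i}" for k
    using coprime_prod_disjoint[OF inj prime, of "S - {i}" "{k}"] S that by (auto simp: D_def)
  have "D * p j dvd N" "D * p i dvd N"
    unfolding prod_S[symmetric] prod_S'[symmetric]
    using S \<open>j \<in> {1..r}\<close> by (auto intro: prod_dvd_prod_subset)
  moreover have "p j < p i"
    using strict_mono_onD[OF strict_mono \<open>j \<in> {1..r}\<close> \<open>i \<in> {1..r}\<close> \<open>j < i\<close>] .
  ultimately have "nbhd_card N (D * p j) \<le> nbhd_card N (D * p i)"
    using prime \<open>i \<in> {1..r}\<close> \<open>j \<in> {1..r}\<close> \<open>j \<notin> S\<close> subprod_pos[of "{1..r}"]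
    by (intro nbhd_card_mult_prime_mono coprime_D) auto
  then show ?thesis by (simp add: prod_S prod_S')
qed

lemma nbhd_card_prefix_le:
  assumes "S \<subseteq> {1..r}"
  shows "nbhd_card N (\<Prod>k\<in>{1..card S}. p k) \<le> nbhd_card N (\<Prod>k\<in>S. p k)"
  using assms
proof (induction "\<Sum>S" arbitrary: S rule: less_induct)
  case less
  define k where "k = card S"
  have "finite S" using less.prems by (rule finite_subset) simp
  show ?case
  proof (cases "S = {1..k}")
    case True
    then show ?thesis by (simp add: k_def[symmetric])
  next
    case False
    have "k \<le> r" unfolding k_def using card_mono[OF _ less.prems] by simp
    have "card {1..k} = card S" by (simp add: k_def)
    then have "\<not> {1..k} \<subseteq> S" "\<not> S \<subseteq> {1..k}"
      using False card_subset_eq[OF \<open>finite S\<close> _ \<open>card {1..k} = card S\<close>]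
        card_subset_eq[OF finite_atLeastAtMost _ \<open>card {1..k} = card S\<close>[symmetric]]
      by blast+
    then obtain i j where i: "i \<in> S" "i \<notin> {1..k}" and j: "j \<in> {1..k}" "j \<notin> S"
      by blast
    have "j < i" "j \<in> {1..r}" using i j less.prems \<open>k \<le> r\<close> by auto
    define S' where "S' = insert j (S - {i})"
    have "S' \<subseteq> {1..r}" using less.prems \<open>j \<in> {1..r}\<close> by (auto simp: S'_def)
    have "0 < card S" using \<open>finite S\<close> i by (auto simp: card_gt_0_iff)
    then have "card S' = k"
      using \<open>finite S\<close> i j by (simp add: S'_def k_def)
    have "\<Sum>S' < \<Sum>S"
      using \<open>finite S\<close> i j \<open>j < i\<close> by (simp add: S'_def sum.remove[of S i])
    then have "nbhd_card N (\<Prod>k\<in>{1..card S'}. p k) \<le> nbhd_card N (\<Prod>k\<in>S'. p k)"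
      using \<open>S' \<subseteq> {1..r}\<close> by (rule less.hyps)
    also have "\<dots> \<le> nbhd_card N (\<Prod>k\<in>S. p k)"
      unfolding S'_def using less.prems i j \<open>j < i\<close> \<open>j \<in> {1..r}\<close> by (intro nbhd_card_exchange) auto
    finally show ?thesis using \<open>card S' = k\<close> by (simp add: k_def)
  qed
qed

lemma exists_prefix_nbhd_card_le:
  assumes "2 \<le> r" "m dvd N"
  shows "\<exists>k\<in>{1..<r}. nbhd_card N (\<Prod>i\<in>{1..k}. p i) \<le> nbhd_card N m"
proof -
  obtain S where S: "S \<subseteq> {1..r}" "m = (\<Prod>i\<in>S. p i)"
    using dvd_N_imp_subprod assms(2) by blast
  show ?thesis
  proof (cases "card S \<in> {1..<r}")
    case True
    then show ?thesis using nbhd_card_prefix_le[OF S(1)] S(2) by blast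
  next
    case False
    have "finite S" using S(1) by (rule finite_subset) simp
    have "card S \<le> r" using card_mono[OF _ S(1)] by simp
    with False have "card S = 0 \<or> card S = card {1..r}" by auto
    then have "S = {} \<or> S = {1..r}"
      using \<open>finite S\<close> card_subset_eq[OF finite_atLeastAtMost S(1)] by auto
    then have "nbhd_card N m = N"
      using S(2) subprod_pos[of "{1..r}"] by (auto simp: nbhd_card_def)
    moreover have "nbhd_card N (\<Prod>i\<in>{1..1}. p i) \<le> N"
      using assms(1) subprod_pos[of "{1..r}"] by (intro nbhd_card_le dvd_prodI) auto
    ultimately show ?thesis using assms(1) by (intro bexI[of _ 1]) auto
  qed
qed

lemma pg_deg_eq: "a < N \<Longrightarrow> pg_deg N a = nbhd_card N (N div gcd a N) - 1"
  using subprod_pos[of "{1..r}"] by (intro pg_deg_eq_nbhd_card coprime_div_N) auto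

lemma prod_suffix:
  assumes "2 \<le> s" "s \<le> r"
  shows "(\<Prod>i\<in>{s..r}. p i) < N" "N div (\<Prod>i\<in>{s..r}. p i) = (\<Prod>i\<in>{1..s-1}. p i)"
proof -
  have "{1..r} - {s..r} = {1..s-1}" using assms by auto
  then have N: "N = (\<Prod>i\<in>{1..s-1}. p i) * (\<Prod>i\<in>{s..r}. p i)"
    using N_eq_complement_times[of "{s..r}"] assms by simp
  have pos: "0 < (\<Prod>i\<in>{1..s-1}. p i)" "0 < (\<Prod>i\<in>{s..r}. p i)"
    using assms subprod_pos[of "{1..s-1}"] subprod_pos[of "{s..r}"] by auto
  have "p 1 \<le> (\<Prod>i\<in>{1..s-1}. p i)"
    using pos(1) assms by (intro dvd_imp_le dvd_prodI) auto
  moreover have "2 \<le> p 1" using prime[of 1] assms by (simp add: prime_ge_2_nat)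
  ultimately have "1 < (\<Prod>i\<in>{1..s-1}. p i)" by linarith
  with N pos(2)
  show "(\<Prod>i\<in>{s..r}. p i) < N" "N div (\<Prod>i\<in>{s..r}. p i) = (\<Prod>i\<in>{1..s-1}. p i)"
    by simp_all
qed

lemma pg_deg_prod_suffix:
  assumes "2 \<le> s" "s \<le> r"
  shows "pg_deg N (\<Prod>i\<in>{s..r}. p i) = nbhd_card N (\<Prod>i\<in>{1..s-1}. p i) - 1"
proof -
  have "gcd (\<Prod>i\<in>{s..r}. p i) N = (\<Prod>i\<in>{s..r}. p i)"
    using assms by (intro gcd_nat.absorb1 prod_dvd_prod_subset) auto
  then show ?thesis using pg_deg_eq prod_suffix[OF assms] by simp
qed

end

theorem lemma3p1:
  fixes p :: "nat \<Rightarrow> nat" and r n :: nat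
  assumes "r \<ge> 3"
    and "\<And>i. i \<in> {1..r} \<Longrightarrow> prime (p i)"
    and "strict_mono_on {1..r} p"
    and "n = (\<Prod>i\<in>{1..r}. p i)"
  shows "pg_min_deg n = Min {pg_deg n (\<Prod>i\<in>{s..r}. p i) | s. 2 \<le> s \<and> s \<le> r}"
proof -
  interpret increasing_primes p r using assms(2,3) by unfold_locales
  have "2 \<le> r" using assms(1) by simp
  let ?V = "{pg_deg N (\<Prod>i\<in>{s..r}. p i) | s. 2 \<le> s \<and> s \<le> r}"
  have "?V \<subseteq> pg_deg N ` {0..<N}" using prod_suffix(1) by auto
  moreover have "?V \<noteq> {}" using \<open>2 \<le> r\<close> by auto
  moreover have "\<exists>v\<in>?V. v \<le> x" if x: "x \<in> pg_deg N ` {0..<N}" for x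
  proof -
    obtain a where "a < N" "x = pg_deg N a" using x by auto
    have "N div gcd a N dvd N" by (metis dvd_div_mult_self dvd_triv_left gcd_dvd2)
    then obtain k where k: "k \<in> {1..<r}"
      and le: "nbhd_card N (\<Prod>i\<in>{1..k}. p i) \<le> nbhd_card N (N div gcd a N)"
      using exists_prefix_nbhd_card_le \<open>2 \<le> r\<close> by blast
    have "pg_deg N (\<Prod>i\<in>{k+1..r}. p i) \<in> ?V" using k by auto
    moreover have "pg_deg N (\<Prod>i\<in>{k+1..r}. p i) \<le> x"
      using pg_deg_prod_suffix[of "k+1"] k le pg_deg_eq[OF \<open>a < N\<close>] \<open>x = pg_deg N a\<close> by simp
    ultimately show ?thesis by blast
  qed
  ultimately show ?thesis
    unfolding assms(4) pg_min_deg_def by (intro Min_eq_Min_of_dominating_subset) auto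
qed

end
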